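(* Let $R$ be a commutative ring and $f\in R$. If $Rf^n$ is a projective $R$-module for some $n\geq 1$, then for every $k\geq n$ the $R$-module $Rf^k$ is canonically isomorphic to $Rf^n$ (equivalently, $\operatorname{Ann}(f^k)=\operatorname{Ann}(f^n)$ for all $k\geq n$). *)

theory Defs
  imports Main
begin

definition principal :: "'a::comm_ring_1 \<Rightarrow> 'a set" where
  "principal x = {r * x | r. True}"

definition Ann :: "'a::comm_ring_1 \<Rightarrow> 'a set" where
  "Ann x = {r. r * x = 0}"

text \<open>The free R-module on the index type 'i: finitely supported functions 'i => R,
  with pointwise addition and scalar multiplication.\<close>

definition free_mod :: "('i \<Rightarrow> 'a::comm_ring_1) set" where
  "free_mod = {v. finite {i. v i \<noteq> 0}}"

text \<open>A submodule M of R is projective iff it is a direct summand (retract) of a free module: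
  there are R-linear maps s : M -> F and p : F -> M with p o s = id on M.
  The index type 'i of the free module is a parameter; when it occurs as a free type variable
  in a hypothesis of a theorem, it is implicitly existentially quantified.\<close>

definition projective_submod :: "'i itself \<Rightarrow> 'a::comm_ring_1 set \<Rightarrow> bool" where
  "projective_submod _ M \<longleftrightarrow>
    (\<exists>(s :: 'a \<Rightarrow> ('i \<Rightarrow> 'a)) (p :: ('i \<Rightarrow> 'a) \<Rightarrow> 'a).
       (\<forall>x\<in>M. s x \<in> free_mod) \<and> (\<forall>v\<in>free_mod. p v \<in> M) \<and>
       (\<forall>x\<in>M. \<forall>y\<in>M. s (x + y) = (\<lambda>i. s x i + s y i)) \<and>
       (\<forall>r. \<forall>x\<in>M. s (r * x) = (\<lambda>i. r * s x i)) \<and>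
       (\<forall>v\<in>free_mod. \<forall>w\<in>free_mod. p (\<lambda>i. v i + w i) = p v + p w) \<and>
       (\<forall>r. \<forall>v\<in>free_mod. p (\<lambda>i. r * v i) = r * p v) \<and>
       (\<forall>x\<in>M. p (s x) = x))"

end

theory Submission
  imports Defs
begin

text \<open>A retraction of a free module onto \<open>R g\<close> yields a dual basis: finitely many \<open>v\<^sub>i \<in> R\<close>
  and \<open>y\<^sub>i \<in> R g\<close> with \<open>g = \<Sum>\<^sub>i v\<^sub>i y\<^sub>i\<close>, where the \<open>v\<^sub>i\<close> are the coordinates of the image of \<open>g\<close>,
  so that \<open>Ann g \<subseteq> Ann v\<^sub>i\<close>. If \<open>f\<close> divides \<open>g\<close> and \<open>r f g = 0\<close>, then \<open>r f v\<^sub>i = 0\<close>, and since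
  each \<open>y\<^sub>i\<close> is a multiple of \<open>g\<close>, hence of \<open>f\<close>, every term \<open>r v\<^sub>i y\<^sub>i\<close> of \<open>r g\<close> vanishes:
  \<open>Ann (f g) = Ann g\<close>. For \<open>g = f ^ n\<close> (this is where \<open>n \<ge> 1\<close> is needed) the chain
  \<open>Ann (f ^ k)\<close> is therefore constant from \<open>k = n\<close> on, which is exactly injectivity of
  multiplication by \<open>f ^ (k - n)\<close> on \<open>R f ^ n\<close>.\<close>

definition free_basis :: "'i \<Rightarrow> 'i \<Rightarrow> 'a::comm_ring_1" where
  "free_basis i = (\<lambda>j. if j = i then 1 else 0)"

lemma free_basis_in_free_mod: "free_basis i \<in> free_mod"
proof -
  have "{j. free_basis i j \<noteq> 0} \<subseteq> {i}" by (auto simp: free_basis_def)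
  then show ?thesis unfolding free_mod_def using finite_subset by blast
qed

lemma scaled_free_basis_in_free_mod: "(\<lambda>j. c * free_basis i j) \<in> free_mod"
proof -
  have "{j. c * free_basis i j \<noteq> 0} \<subseteq> {i}" by (auto simp: free_basis_def)
  then show ?thesis unfolding free_mod_def using finite_subset by blast
qed

lemma linear_on_free_mod_expansion:
  fixes p :: "('i \<Rightarrow> 'a::comm_ring_1) \<Rightarrow> 'a"
  assumes add: "\<forall>v\<in>free_mod. \<forall>w\<in>free_mod. p (\<lambda>i. v i + w i) = p v + p w"
    and scale: "\<forall>r. \<forall>v\<in>free_mod. p (\<lambda>i. r * v i) = r * p v"
    and "finite A" and "{i. w i \<noteq> 0} \<subseteq> A"
  shows "p w = (\<Sum>i\<in>A. w i * p (free_basis i))"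
  using assms(3,4)
proof (induction A arbitrary: w rule: finite_induct)
  case empty
  have "(\<lambda>j::'i. 0::'a) \<in> free_mod" by (simp add: free_mod_def)
  then have "p (\<lambda>j. 0) = 0" using scale[rule_format, of "\<lambda>j. 0" 0] by simp
  moreover from empty have "w = (\<lambda>j. 0)" by auto
  ultimately show ?case by simp
next
  case (insert x A)
  define w' where "w' = w(x := 0)"
  have supp_w': "{i. w' i \<noteq> 0} \<subseteq> A" using insert.prems by (auto simp: w'_def)
  have "w' \<in> free_mod"
    using supp_w' insert.hyps(1) by (auto simp: free_mod_def intro: finite_subset)
  have "w = (\<lambda>j. w' j + w x * free_basis x j)"
    by (auto simp: w'_def free_basis_def)
  then have "p w = p (\<lambda>j. w' j + w x * free_basis x j)" by (rule arg_cong)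
  also have "\<dots> = p w' + p (\<lambda>j. w x * free_basis x j)"
    by (rule add[rule_format, OF \<open>w' \<in> free_mod\<close> scaled_free_basis_in_free_mod])
  also have "p (\<lambda>j. w x * free_basis x j) = w x * p (free_basis x)"
    by (rule scale[rule_format, OF free_basis_in_free_mod])
  also have "p w' = (\<Sum>i\<in>A. w' i * p (free_basis i))" using insert.IH supp_w' .
  also have "\<dots> = (\<Sum>i\<in>A. w i * p (free_basis i))"
    using insert.hyps(2) by (intro sum.cong) (auto simp: w'_def)
  finally show ?case using insert.hyps by (simp add: add.commute)
qed

lemma projective_principal_dual_basis:
  fixes g :: "'a::comm_ring_1"
  assumes "projective_submod TYPE('i) (principal g)"
  obtains v :: "'i \<Rightarrow> 'a" and y :: "'i \<Rightarrow> 'a"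
  where "finite {i. v i \<noteq> 0}" and "\<And>i. y i \<in> principal g"
    and "g = (\<Sum>i\<in>{i. v i \<noteq> 0}. v i * y i)"
    and "\<And>r i. r * g = 0 \<Longrightarrow> r * v i = 0"
proof -
  obtain s :: "'a \<Rightarrow> 'i \<Rightarrow> 'a" and p :: "('i \<Rightarrow> 'a) \<Rightarrow> 'a" where
    s_free: "\<forall>x\<in>principal g. s x \<in> free_mod" and
    p_into: "\<forall>v\<in>free_mod. p v \<in> principal g" and
    s_scale: "\<forall>r. \<forall>x\<in>principal g. s (r * x) = (\<lambda>i. r * s x i)" and
    p_add: "\<forall>v\<in>free_mod. \<forall>w\<in>free_mod. p (\<lambda>i. v i + w i) = p v + p w" and
    p_scale: "\<forall>r. \<forall>v\<in>free_mod. p (\<lambda>i. r * v i) = r * p v" and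
    retract: "\<forall>x\<in>principal g. p (s x) = x"
    using assms unfolding projective_submod_def by blast
  have g_in: "g \<in> principal g" unfolding principal_def by (auto intro: exI[of _ 1])
  define v where "v = s g"
  have "v \<in> free_mod" unfolding v_def by (rule s_free[rule_format, OF g_in])
  then have v_finite: "finite {i. v i \<noteq> 0}" by (simp add: free_mod_def)
  have y_in: "p (free_basis i) \<in> principal g" for i
    by (rule p_into[rule_format, OF free_basis_in_free_mod])
  have g_sum: "g = (\<Sum>i\<in>{i. v i \<noteq> 0}. v i * p (free_basis i))"
  proof -
    have "g = p v" unfolding v_def using retract[rule_format, OF g_in] by simp
    also have "\<dots> = (\<Sum>i\<in>{i. v i \<noteq> 0}. v i * p (free_basis i))"
      using v_finite by (rule linear_on_free_mod_expansion[OF p_add p_scale]) simp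
    finally show ?thesis .
  qed
  have v_Ann: "r * v i = 0" if "r * g = 0" for r i
  proof -
    have s_multiple: "s (c * g) = (\<lambda>i. c * v i)" for c
      unfolding v_def by (rule s_scale[rule_format, OF g_in])
    have "(\<lambda>i. r * v i) = (\<lambda>i. 0 * v i)"
      using s_multiple[of r] s_multiple[of 0] that by simp
    from fun_cong[OF this, of i] show ?thesis by simp
  qed
  show ?thesis by (rule that[OF v_finite y_in g_sum v_Ann])
qed

lemma Ann_mult_eq_if_projective_principal:
  fixes f g :: "'a::comm_ring_1"
  assumes "projective_submod TYPE('i) (principal g)" and "f dvd g"
  shows "Ann (f * g) = Ann g"
proof
  show "Ann g \<subseteq> Ann (f * g)" by (auto simp: Ann_def mult.left_commute[of _ f])
next
  obtain v :: "'i \<Rightarrow> 'a" and y where y_in: "\<And>i. y i \<in> principal g"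
    and g_sum: "g = (\<Sum>i\<in>{i. v i \<noteq> 0}. v i * y i)"
    and v_Ann: "\<And>r i. r * g = 0 \<Longrightarrow> r * v i = 0"
    using projective_principal_dual_basis[OF assms(1)] by metis
  obtain h where g: "g = f * h" using assms(2) by blast
  show "Ann (f * g) \<subseteq> Ann g"
  proof
    fix r assume "r \<in> Ann (f * g)"
    then have coord_killed: "r * f * v i = 0" for i
      using v_Ann[of "r * f"] by (simp add: Ann_def mult.assoc)
    have term_killed: "r * v i * y i = 0" for i
    proof -
      obtain c where "y i = c * g" using y_in[of i] by (auto simp: principal_def)
      then have "r * v i * y i = c * h * (r * f * v i)" using g by (simp add: algebra_simps)
      then show ?thesis using coord_killed by simp
    qed
    have "r * g = (\<Sum>i\<in>{i. v i \<noteq> 0}. r * v i * y i)"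
      by (subst g_sum) (simp add: sum_distrib_left mult.assoc)
    also have "\<dots> = 0" using term_killed by simp
    finally show "r \<in> Ann g" by (simp add: Ann_def)
  qed
qed

lemma Ann_mult: "Ann (x * y) = {r. r * x \<in> Ann y}"
  by (simp add: Ann_def mult.assoc)

lemma Ann_power_stable:
  fixes f :: "'a::comm_ring_1"
  assumes "Ann (f ^ Suc n) = Ann (f ^ n)" and "n \<le> k"
  shows "Ann (f ^ k) = Ann (f ^ n)"
  using assms(2)
proof (induction k rule: dec_induct)
  case (step k)
  have "Ann (f ^ Suc k) = {r. r * f \<in> Ann (f ^ k)}" by (simp add: Ann_mult)
  also have "\<dots> = {r. r * f \<in> Ann (f ^ n)}" using step.IH by simp
  also have "\<dots> = Ann (f ^ Suc n)" by (simp add: Ann_mult)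
  finally show ?case using assms(1) by simp
qed simp

lemma bij_betw_mult_principal:
  fixes c g :: "'a::comm_ring_1"
  assumes "Ann (c * g) = Ann g"
  shows "bij_betw (\<lambda>x. c * x) (principal g) (principal (c * g))"
  unfolding bij_betw_def
proof
  show "inj_on (\<lambda>x. c * x) (principal g)"
  proof (rule inj_onI)
    fix x y assume "x \<in> principal g" "y \<in> principal g" and eq: "c * x = c * y"
    then obtain a b where x: "x = a * g" and y: "y = b * g" by (auto simp: principal_def)
    have "a - b \<in> Ann (c * g)" using eq x y by (simp add: Ann_def algebra_simps)
    then have "(a - b) * g = 0" using assms unfolding Ann_def by blast
    then show "x = y" using x y by (simp add: algebra_simps)
  qed
  have "(\<lambda>x. c * x) ` principal g = (\<lambda>r. c * (r * g)) ` UNIV"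
    by (auto simp: principal_def)
  also have "\<dots> = (\<lambda>r. r * (c * g)) ` UNIV" by (simp add: mult.left_commute)
  also have "\<dots> = principal (c * g)" by (auto simp: principal_def)
  finally show "(\<lambda>x. c * x) ` principal g = principal (c * g)" .
qed

theorem proposition2p8:
  fixes f :: "'a::comm_ring_1" and n :: nat
  assumes "n \<ge> 1"
    and "projective_submod TYPE('i) (principal (f ^ n))"
  shows "\<forall>k\<ge>n. bij_betw (\<lambda>x. f ^ (k - n) * x) (principal (f ^ n)) (principal (f ^ k))
                 \<and> Ann (f ^ k) = Ann (f ^ n)"
proof (intro allI impI)
  fix k assume "n \<le> k"
  have "f dvd f ^ n" using assms(1) by (simp add: dvd_power)
  then have "Ann (f ^ Suc n) = Ann (f ^ n)"
    using Ann_mult_eq_if_projective_principal[OF assms(2)] by simp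
  then have ann: "Ann (f ^ k) = Ann (f ^ n)" using Ann_power_stable \<open>n \<le> k\<close> by blast
  have "f ^ (k - n) * f ^ n = f ^ k" using \<open>n \<le> k\<close> by (simp flip: power_add)
  then have "bij_betw (\<lambda>x. f ^ (k - n) * x) (principal (f ^ n)) (principal (f ^ k))"
    using bij_betw_mult_principal[of "f ^ (k - n)" "f ^ n"] ann by simp
  with ann show "bij_betw (\<lambda>x. f ^ (k - n) * x) (principal (f ^ n)) (principal (f ^ k))
             \<and> Ann (f ^ k) = Ann (f ^ n)" by blast
qed

end
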